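(* Let $\mathcal{F}\subset\mathbb{R}^{n\times n}$ be finite, $\mathbf{A}\in\mathbb{R}^{n\times n}$, $\delta\in(0,1)$, and $\mathrm{OPT}=\min_{\mathbf{B}\in\mathcal{F}}\|\mathbf{A}-\mathbf{B}\|_\mathsf{F}$. If the universal constant $c$ in the Coarse Approximation procedure (described in the context) is sufficiently large, the procedure uses $O(\log(1/\delta))$ queries of the form $\mathbf{x}\mapsto\mathbf{A}\mathbf{x}$ and outputs $M$ satisfying, with probability at least $1-\delta$, $$\mathrm{OPT}\le M\le 6|\mathcal{F}|\cdot\mathrm{OPT}.$$
   Context: Coarse Approximation procedure with inputs $\mathcal{F}$, $\delta$: set $t=\lceil c\log(1/\delta)\rceil$ for a universal constant $c$. Draw independent $\mathbf{\Pi}^1,\dots,\mathbf{\Pi}^t\in\mathbb{R}^{n\times 2}$, each with i.i.d. $\mathcal{N}(0,1/2)$ entries. For each $i$, compute $\mathbf{A}\mathbf{\Pi}^i$ (2 queries) and let $M_i=\sqrt{6|\mathcal{F}|}\cdot\min_{\mathbf{B}\in\mathcal{F}}\|\mathbf{A}\mathbf{\Pi}^i-\mathbf{B}\mathbf{\Pi}^i\|_\mathsf{F}$. Output $M=\mathrm{median}(M_1,\dots,M_t)$. *)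

theory Defs
  imports "HOL-Probability.Probability"
begin

text \<open>Matrices are represented as functions nat => nat => real; an n x m matrix
  is such a function that vanishes outside the index range.\<close>

definition sq_mats :: "nat \<Rightarrow> (nat \<Rightarrow> nat \<Rightarrow> real) set" where
  "sq_mats n = {X. \<forall>i j. (n \<le> i \<or> n \<le> j) \<longrightarrow> X i j = 0}"

definition frob :: "nat \<Rightarrow> nat \<Rightarrow> (nat \<Rightarrow> nat \<Rightarrow> real) \<Rightarrow> real" where
  "frob m k X = sqrt (\<Sum>i<m. \<Sum>j<k. (X i j)\<^sup>2)"

definition apply_sketch :: "nat \<Rightarrow> (nat \<Rightarrow> nat \<Rightarrow> real) \<Rightarrow> (nat \<times> nat \<Rightarrow> real) \<Rightarrow> (nat \<Rightarrow> nat \<Rightarrow> real)" where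
  "apply_sketch n X P = (\<lambda>i j. \<Sum>k<n. X i k * P (k, j))"

text \<open>N(0,1/2): standard deviation sqrt(1/2).\<close>
definition gauss_half :: "real measure" where
  "gauss_half = density lborel (normal_density 0 (sqrt (1/2)))"

definition sketch_measure :: "nat \<Rightarrow> (nat \<times> nat \<Rightarrow> real) measure" where
  "sketch_measure n = PiM ({..<n} \<times> {..<2}) (\<lambda>_. gauss_half)"

definition trials :: "nat \<Rightarrow> nat \<Rightarrow> (nat \<Rightarrow> (nat \<times> nat \<Rightarrow> real)) measure" where
  "trials n t = PiM {..<t} (\<lambda>_. sketch_measure n)"

text \<open>Median of a list: the element at position (length div 2) of the sorted list
  (for odd length this is the usual median; for even length the upper median).\<close>
definition median :: "real list \<Rightarrow> real" where
  "median xs = sort xs ! (length xs div 2)"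

definition single_estimate ::
  "nat \<Rightarrow> (nat \<Rightarrow> nat \<Rightarrow> real) set \<Rightarrow> (nat \<Rightarrow> nat \<Rightarrow> real) \<Rightarrow> (nat \<times> nat \<Rightarrow> real) \<Rightarrow> real" where
  "single_estimate n F A P = sqrt (6 * real (card F)) *
     Min ((\<lambda>B. frob n 2 (\<lambda>i j. apply_sketch n A P i j - apply_sketch n B P i j)) ` F)"

definition coarse_output ::
  "nat \<Rightarrow> (nat \<Rightarrow> nat \<Rightarrow> real) set \<Rightarrow> (nat \<Rightarrow> nat \<Rightarrow> real) \<Rightarrow> nat \<Rightarrow> (nat \<Rightarrow> (nat \<times> nat \<Rightarrow> real)) \<Rightarrow> real" where
  "coarse_output n F A t \<omega> = median (map (\<lambda>i. single_estimate n F A (\<omega> i)) [0..<t])"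

text \<open>Number of matrix-vector queries: each sketch Pi^i has 2 columns.\<close>
definition num_queries :: "nat \<Rightarrow> nat" where
  "num_queries t = 2 * t"

definition num_trials :: "real \<Rightarrow> real \<Rightarrow> nat" where
  "num_trials c \<delta> = nat \<lceil>c * ln (1 / \<delta>)\<rceil>"

end

theory Submission
  imports Defs
begin

text \<open>
  For a candidate \<open>B\<close>, the sketched error \<open>S\<^sub>B = \<parallel>(A - B)\<Pi>\<parallel>\<^sub>F\<^sup>2\<close> is a sum over the rows of
  \<open>A - B\<close> of squared norms of two-dimensional centred Gaussian vectors, and its mean is
  \<open>W\<^sub>B = \<parallel>A - B\<parallel>\<^sub>F\<^sup>2\<close>. A two-dimensional Gaussian has bounded density, so the squared norm
  \<open>Z\<close> of each such vector satisfies the small-ball bound \<open>P(Z \<le> s) \<le> s / E Z\<close>; by a layer-cake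
  argument this makes \<open>S\<^sub>B\<close> anti-concentrated: \<open>E[S\<^sub>B; G] \<ge> (19/40) W\<^sub>B P(G)\<^sup>2\<close> for every event \<open>G\<close>.
  Anti-concentration bounds both tails: \<open>P(S\<^sub>B < W\<^sub>B / (6|F|)) \<le> 40 / (114 |F|)\<close> for every \<open>B\<close>,
  and \<open>P(S\<^sub>B > 6|F| W\<^sub>B) \<le> 0.103\<close> for the minimiser of \<open>W\<^sub>B\<close>. A union bound shows that a single
  estimate lies in \<open>[OPT, 6|F| OPT]\<close> with probability at least \<open>27/50 > 1/2\<close>. By Hoeffding's
  inequality more than half of \<open>t\<close> independent estimates lie in this interval, and hence so does
  their median, with probability at least \<open>1 - exp(-2t/625)\<close>, which is \<open>1 - \<delta>\<close> once
  \<open>t \<ge> (625/2) ln(1/\<delta>)\<close>.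
\<close>

section \<open>Anti-concentration\<close>

lemma sum_levels_le:
  fixes h z :: real
  assumes "0 \<le> h" "0 \<le> z"
  shows "(\<Sum>l = 1..N. if real l * h < z then h else 0) \<le> min (real N * h) z"
proof (induction N)
  case (Suc N)
  then show ?case
    using assms by (auto simp: sum.cl_ivl_Suc algebra_simps min_def split: if_splits)
qed (use assms in simp)

definition anti_concentrated :: "'a measure \<Rightarrow> real \<Rightarrow> real \<Rightarrow> ('a \<Rightarrow> real) \<Rightarrow> bool" where
  "anti_concentrated M c W Z \<longleftrightarrow>
     (\<forall>A \<in> sets M. c * W * (measure M A)\<^sup>2 \<le> (\<integral>\<omega>. Z \<omega> * indicator A \<omega> \<partial>M))"

lemma anti_concentrated_sum:
  assumes "finite I"
    and "\<And>i. i \<in> I \<Longrightarrow> anti_concentrated M c (W i) (Z i)" "\<And>i. i \<in> I \<Longrightarrow> integrable M (Z i)"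
  shows "anti_concentrated M c (\<Sum>i\<in>I. W i) (\<lambda>\<omega>. \<Sum>i\<in>I. Z i \<omega>)"
  unfolding anti_concentrated_def
proof
  fix A assume "A \<in> sets M"
  have "c * (\<Sum>i\<in>I. W i) * (measure M A)\<^sup>2 = (\<Sum>i\<in>I. c * W i * (measure M A)\<^sup>2)"
    by (simp add: sum_distrib_left sum_distrib_right)
  also have "\<dots> \<le> (\<Sum>i\<in>I. \<integral>\<omega>. Z i \<omega> * indicator A \<omega> \<partial>M)"
    using assms(2) \<open>A \<in> sets M\<close> by (intro sum_mono) (auto simp: anti_concentrated_def)
  also have "\<dots> = (\<integral>\<omega>. (\<Sum>i\<in>I. Z i \<omega> * indicator A \<omega>) \<partial>M)"
    using assms(3) \<open>A \<in> sets M\<close>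
    by (intro Bochner_Integration.integral_sum[symmetric]) (auto intro: integrable_real_mult_indicator)
  finally show "c * (\<Sum>i\<in>I. W i) * (measure M A)\<^sup>2 \<le> (\<integral>\<omega>. (\<Sum>i\<in>I. Z i \<omega>) * indicator A \<omega> \<partial>M)"
    by (simp add: sum_distrib_right)
qed

context prob_space
begin

lemma sum_level_probs_le_integral:
  fixes Z :: "'a \<Rightarrow> real"
  assumes Z_meas: "Z \<in> borel_measurable M" and Z_nonneg: "\<And>\<omega>. \<omega> \<in> space M \<Longrightarrow> 0 \<le> Z \<omega>"
    and Z_int: "integrable M Z" and A: "A \<in> events" and "0 \<le> h"
  shows "(\<Sum>l = 1..N. h * prob (A \<inter> {\<omega> \<in> space M. real l * h < Z \<omega>}))
           \<le> (\<integral>\<omega>. Z \<omega> * indicator A \<omega> \<partial>M)"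
proof -
  define E where "E l = A \<inter> {\<omega> \<in> space M. real l * h < Z \<omega>}" for l :: nat
  have E_events: "E l \<in> events" for l
    unfolding E_def using A Z_meas by measurable
  have levels_le: "(\<Sum>l = 1..N. h * indicator (E l) \<omega>) \<le> Z \<omega> * indicator A \<omega>"
    if "\<omega> \<in> space M" for \<omega>
  proof (cases "\<omega> \<in> A")
    case True
    then have "(\<Sum>l = 1..N. h * indicator (E l) \<omega>) = (\<Sum>l = 1..N. if real l * h < Z \<omega> then h else 0)"
      using that by (intro sum.cong) (auto simp: E_def)
    also have "\<dots> \<le> Z \<omega>"
      using sum_levels_le[OF \<open>0 \<le> h\<close> Z_nonneg[OF that]] by simp
    finally show ?thesis using True by simp
  qed (simp add: E_def)
  have "(\<Sum>l = 1..N. h * prob (E l)) = (\<Sum>l = 1..N. \<integral>\<omega>. h * indicator (E l) \<omega> \<partial>M)"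
    using E_events by simp
  also have "\<dots> = (\<integral>\<omega>. (\<Sum>l = 1..N. h * indicator (E l) \<omega>) \<partial>M)"
    using E_events by (intro Bochner_Integration.integral_sum[symmetric]) (simp add: less_top[symmetric])
  also have "\<dots> \<le> (\<integral>\<omega>. Z \<omega> * indicator A \<omega> \<partial>M)"
    using levels_le
    by (intro integral_mono Bochner_Integration.integrable_sum integrable_mult_right
        integrable_real_indicator integrable_real_mult_indicator E_events A Z_int)
       (auto simp: less_top[symmetric])
  finally show ?thesis by (simp add: E_def)
qed

text \<open>
  The layer-cake bound with \<open>N\<close> levels of height \<open>h = w P(A) / N\<close>; infinitely many levels would
  give the constant \<open>1/2\<close>.
\<close>
lemma anti_concentrated_if_small_ball:
  fixes Z :: "'a \<Rightarrow> real" and N :: nat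
  assumes Z_meas: "Z \<in> borel_measurable M" and Z_nonneg: "\<And>\<omega>. \<omega> \<in> space M \<Longrightarrow> 0 \<le> Z \<omega>"
    and Z_int: "integrable M Z" and "0 < w" and "0 < N"
    and small_ball: "\<And>s. 0 \<le> s \<Longrightarrow> prob {\<omega> \<in> space M. Z \<omega> \<le> s} \<le> s / w"
  shows "anti_concentrated M ((real N - 1) / (2 * real N)) w Z"
  unfolding anti_concentrated_def
proof
  fix A assume A: "A \<in> events"
  define q where "q = prob A"
  define h where "h = w * q / N"
  have "0 \<le> h" using \<open>0 < w\<close> by (simp add: h_def q_def)
  have level_prob: "q - real l * h / w \<le> prob (A \<inter> {\<omega> \<in> space M. real l * h < Z \<omega>})" for l
  proof -
    let ?E = "A \<inter> {\<omega> \<in> space M. real l * h < Z \<omega>}"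
    have "A \<subseteq> ?E \<union> {\<omega> \<in> space M. Z \<omega> \<le> real l * h}"
      using sets.sets_into_space[OF A] by auto
    then have "q \<le> prob (?E \<union> {\<omega> \<in> space M. Z \<omega> \<le> real l * h})"
      unfolding q_def using A Z_meas by (intro finite_measure_mono) auto
    also have "\<dots> \<le> prob ?E + prob {\<omega> \<in> space M. Z \<omega> \<le> real l * h}"
      using A Z_meas by (intro measure_Un_le) auto
    also have "\<dots> \<le> prob ?E + real l * h / w"
      using small_ball \<open>0 \<le> h\<close> by simp
    finally show ?thesis by simp
  qed
  have "(\<Sum>l = 1..N. h * (q - real l * h / w)) = N * h * q - h * h / w * (\<Sum>l = 1..N. real l)"
    by (simp add: sum_subtractf sum_distrib_left algebra_simps)
  also have "\<dots> = (real N - 1) / (2 * real N) * w * q\<^sup>2"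
    using \<open>0 < w\<close> \<open>0 < N\<close> double_gauss_sum_from_Suc_0[of N, where 'a=real]
    by (simp add: h_def field_simps power2_eq_square)
  finally have "(real N - 1) / (2 * real N) * w * q\<^sup>2 = (\<Sum>l = 1..N. h * (q - real l * h / w))" ..
  also have "\<dots> \<le> (\<Sum>l = 1..N. h * prob (A \<inter> {\<omega> \<in> space M. real l * h < Z \<omega>}))"
    using level_prob \<open>0 \<le> h\<close> by (intro sum_mono mult_left_mono) auto
  also have "\<dots> \<le> (\<integral>\<omega>. Z \<omega> * indicator A \<omega> \<partial>M)"
    by (rule sum_level_probs_le_integral[OF Z_meas Z_nonneg Z_int A \<open>0 \<le> h\<close>])
  finally show "(real N - 1) / (2 * real N) * w * (prob A)\<^sup>2 \<le> (\<integral>\<omega>. Z \<omega> * indicator A \<omega> \<partial>M)"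
    by (simp add: q_def)
qed

lemma anti_concentrated_lower_tail:
  fixes S :: "'a \<Rightarrow> real"
  assumes anti: "anti_concentrated M c W S" and S_meas: "S \<in> borel_measurable M"
    and S_nonneg: "\<And>\<omega>. \<omega> \<in> space M \<Longrightarrow> 0 \<le> S \<omega>" and S_int: "integrable M S"
    and "0 < c" "0 < e"
  shows "prob {\<omega> \<in> space M. S \<omega> < e * W} \<le> e / c"
proof (cases "0 < W")
  case False
  then have "e * W \<le> 0" using \<open>0 < e\<close> by (simp add: mult_nonneg_nonpos)
  then have empty: "{\<omega> \<in> space M. S \<omega> < e * W} = {}" using S_nonneg by force
  show ?thesis unfolding empty using \<open>0 < c\<close> \<open>0 < e\<close> by simp
next
  case True
  define A where "A = {\<omega> \<in> space M. S \<omega> < e * W}"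
  have A: "A \<in> events" unfolding A_def using S_meas by measurable
  have "c * W * (prob A)\<^sup>2 \<le> (\<integral>\<omega>. S \<omega> * indicator A \<omega> \<partial>M)"
    using anti A by (simp add: anti_concentrated_def)
  also have "\<dots> \<le> (\<integral>\<omega>. e * W * indicator A \<omega> \<partial>M)"
    by (intro integral_mono integrable_mult_right integrable_real_indicator
        integrable_real_mult_indicator A S_int)
       (auto simp: A_def indicator_def less_top[symmetric])
  also have "\<dots> = W * (e * prob A)" using A by simp
  finally have "W * (c * (prob A)\<^sup>2) \<le> W * (e * prob A)" by (simp add: ac_simps)
  then have "c * prob A * prob A \<le> e * prob A"
    using True by (simp add: power2_eq_square ac_simps)
  then have "c * prob A \<le> e"
    using \<open>0 < e\<close> by (cases "prob A = 0") (auto simp: mult_le_cancel_right measure_nonneg less_le)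
  then show ?thesis using \<open>0 < c\<close> by (simp add: A_def field_simps)
qed

lemma anti_concentrated_upper_tail:
  fixes S :: "'a \<Rightarrow> real" and a :: real
  assumes anti: "anti_concentrated M c W S" and S_meas: "S \<in> borel_measurable M"
    and S_nonneg: "\<And>\<omega>. \<omega> \<in> space M \<Longrightarrow> 0 \<le> S \<omega>" and S_int: "integrable M S"
    and mean: "expectation S = W" and "c \<le> 1"
  defines "p \<equiv> prob {\<omega> \<in> space M. a * W < S \<omega>}"
  shows "a * p + c * (1 - p)\<^sup>2 \<le> 1"
proof (cases "W = 0")
  case True
  then have "AE \<omega> in M. S \<omega> = 0"
    using integral_nonneg_eq_0_iff_AE[OF S_int] S_nonneg mean by (auto intro: AE_I2)
  then have "p = 0"
    unfolding p_def using True S_meas by (intro prob_eq_0_AE) auto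
  then show ?thesis using \<open>c \<le> 1\<close> by simp
next
  case False
  have "0 \<le> W" using S_nonneg by (simp add: mean[symmetric] integral_nonneg)
  with False have "0 < W" by simp
  define G where "G = {\<omega> \<in> space M. a * W < S \<omega>}"
  have G: "G \<in> events" unfolding G_def using S_meas by measurable
  have p_G: "p = prob G" by (simp add: p_def G_def)
  from G have G_compl: "space M - G \<in> events" by auto
  have "a * W * p = (\<integral>\<omega>. a * W * indicator G \<omega> \<partial>M)"
    using G by (simp add: p_G)
  also have "\<dots> \<le> (\<integral>\<omega>. S \<omega> * indicator G \<omega> \<partial>M)"
    by (intro integral_mono integrable_mult_right integrable_real_indicator
        integrable_real_mult_indicator G S_int)
       (auto simp: G_def indicator_def less_top[symmetric])
  finally have above: "a * W * p \<le> (\<integral>\<omega>. S \<omega> * indicator G \<omega> \<partial>M)" .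
  have "c * W * (prob (space M - G))\<^sup>2 \<le> (\<integral>\<omega>. S \<omega> * indicator (space M - G) \<omega> \<partial>M)"
    using anti G_compl by (simp add: anti_concentrated_def)
  then have below: "c * W * (1 - p)\<^sup>2 \<le> (\<integral>\<omega>. S \<omega> * indicator (space M - G) \<omega> \<partial>M)"
    by (simp add: prob_compl[OF G] p_G)
  have "W = (\<integral>\<omega>. S \<omega> * indicator G \<omega> + S \<omega> * indicator (space M - G) \<omega> \<partial>M)"
    unfolding mean[symmetric] by (intro Bochner_Integration.integral_cong) (auto simp: indicator_def)
  also have "\<dots> = (\<integral>\<omega>. S \<omega> * indicator G \<omega> \<partial>M) + (\<integral>\<omega>. S \<omega> * indicator (space M - G) \<omega> \<partial>M)"
    using G G_compl S_int by (intro Bochner_Integration.integral_add integrable_real_mult_indicator)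
  finally have "W * (a * p + c * (1 - p)\<^sup>2) \<le> W * 1"
    using above below by (simp add: algebra_simps)
  then show ?thesis using \<open>0 < W\<close> by simp
qed

end

section \<open>Gaussian sketches\<close>

lemma indep_vars_PiM_components:
  assumes "\<And>i. i \<in> I \<Longrightarrow> prob_space (M i)"
  shows "prob_space.indep_vars (PiM I M) M (\<lambda>i \<omega>. \<omega> i) I"
proof -
  interpret prob_space "PiM I M" using assms by (rule prob_space_PiM)
  show ?thesis
  proof (cases "I = {}")
    case True
    then show ?thesis unfolding indep_vars_def indep_sets_def by simp
  next
    case False
    have "distr (PiM I M) (PiM I M) (\<lambda>x. \<lambda>i\<in>I. x i) = distr (PiM I M) (PiM I M) (\<lambda>x. x)"
      by (rule distr_cong) (auto simp: space_PiM PiE_def extensional_restrict)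
    also have "\<dots> = (\<Pi>\<^sub>M i\<in>I. distr (PiM I M) (M i) (\<lambda>x. x i))"
      by (auto intro!: PiM_cong simp: distr_PiM_component assms)
    finally show ?thesis
      by (subst indep_vars_iff_distr_eq_PiM'[OF False]) auto
  qed
qed

lemma (in prob_space) prob_sum_squares_le:
  fixes f g :: "real \<Rightarrow> real"
  assumes X: "distributed M lborel X f" and Y: "distributed M lborel Y g"
    and indep: "indep_var borel X borel Y"
    and f_bound: "\<And>x. f x \<le> m" and g_bound: "\<And>x. g x \<le> m"
    and f_nonneg: "\<And>x. 0 \<le> f x" and g_nonneg: "\<And>x. 0 \<le> g x" and "0 \<le> s"
  shows "prob {\<omega> \<in> space M. (X \<omega>)\<^sup>2 + (Y \<omega>)\<^sup>2 \<le> s} \<le> m\<^sup>2 * pi * s"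
proof -
  have "0 \<le> m" using f_nonneg[of 0] f_bound[of 0] by simp
  have "indep_var lborel X lborel Y"
    using indep unfolding indep_var_def indep_vars_def by (simp add: case_bool_if)
  then have joint: "distributed M (lborel \<Otimes>\<^sub>M lborel) (\<lambda>\<omega>. (X \<omega>, Y \<omega>))
      (\<lambda>(x, y). ennreal (f x) * ennreal (g y))"
    using distributed_joint_indep[OF lborel.sigma_finite_measure_axioms
        lborel.sigma_finite_measure_axioms X Y] by blast
  define C where "C = cball (0::real \<times> real) (sqrt s)"
  have C_sets: "C \<in> sets (lborel \<Otimes>\<^sub>M lborel)"
    unfolding C_def lborel_prod by simp
  have "{\<omega> \<in> space M. (X \<omega>)\<^sup>2 + (Y \<omega>)\<^sup>2 \<le> s} = (\<lambda>\<omega>. (X \<omega>, Y \<omega>)) -` C \<inter> space M"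
    by (auto simp: C_def norm_Pair real_sqrt_le_iff)
  then have "emeasure M {\<omega> \<in> space M. (X \<omega>)\<^sup>2 + (Y \<omega>)\<^sup>2 \<le> s}
      = emeasure (density (lborel \<Otimes>\<^sub>M lborel) (\<lambda>(x, y). ennreal (f x) * ennreal (g y))) C"
    using joint C_sets
    by (simp add: emeasure_distr distributed_distr_eq_density[symmetric] distributed_measurable)
  also have "\<dots> = (\<integral>\<^sup>+z. (\<lambda>(x, y). ennreal (f x) * ennreal (g y)) z * indicator C z \<partial>(lborel \<Otimes>\<^sub>M lborel))"
    using joint C_sets by (simp add: emeasure_density distributed_borel_measurable)
  also have "\<dots> \<le> (\<integral>\<^sup>+z. ennreal (m\<^sup>2) * indicator C z \<partial>(lborel \<Otimes>\<^sub>M lborel))"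
  proof (rule nn_integral_mono)
    fix z :: "real \<times> real"
    have "f (fst z) * g (snd z) \<le> m\<^sup>2"
      using f_bound g_bound g_nonneg \<open>0 \<le> m\<close> by (simp add: power2_eq_square mult_mono)
    then show "(\<lambda>(x, y). ennreal (f x) * ennreal (g y)) z * indicator C z \<le> ennreal (m\<^sup>2) * indicator C z"
      using f_nonneg g_nonneg
      by (auto simp: indicator_def ennreal_mult[symmetric] ennreal_leI split: prod.split)
  qed
  also have "\<dots> = ennreal (m\<^sup>2) * emeasure (lborel \<Otimes>\<^sub>M lborel) C"
    using C_sets by (rule nn_integral_cmult_indicator)
  also have "emeasure (lborel \<Otimes>\<^sub>M lborel) C = ennreal (pi * s)"
    unfolding C_def lborel_prod using \<open>0 \<le> s\<close> by (subst emeasure_cball) (auto simp: unit_ball_vol_2)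
  finally show ?thesis
    using \<open>0 \<le> s\<close> by (simp add: emeasure_eq_measure ennreal_mult[symmetric] mult.assoc)
qed

lemma prob_space_gauss_half: "prob_space gauss_half"
  unfolding gauss_half_def by (rule prob_space_normal_density) simp

lemma sets_gauss_half [simp]: "sets gauss_half = sets borel"
  unfolding gauss_half_def by simp

lemma prob_space_sketch_measure: "prob_space (sketch_measure n)"
  unfolding sketch_measure_def by (intro prob_space_PiM prob_space_gauss_half)

lemma sets_sketch_measure:
  "sets (sketch_measure n) = sets (PiM ({..<n} \<times> {..<2}) (\<lambda>_. borel))"
  unfolding sketch_measure_def by (rule sets_PiM_cong) auto

lemma measurable_sketch_entry [measurable]:
  "k < n \<Longrightarrow> j < 2 \<Longrightarrow> (\<lambda>P. P (k, j)) \<in> borel_measurable (sketch_measure n)"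
  unfolding measurable_cong_sets[OF sets_sketch_measure refl]
  by (intro measurable_component_singleton) auto

lemma indep_vars_sketch_entries:
  "prob_space.indep_vars (sketch_measure n) (\<lambda>_. borel) (\<lambda>p P. P p) ({..<n} \<times> {..<2})"
proof -
  interpret prob_space "sketch_measure n" by (rule prob_space_sketch_measure)
  have "indep_vars (\<lambda>_. gauss_half) (\<lambda>p P. P p) ({..<n} \<times> {..<2})"
    unfolding sketch_measure_def by (rule indep_vars_PiM_components) (rule prob_space_gauss_half)
  then have "indep_vars (\<lambda>_. borel) (\<lambda>p P. id (P p)) ({..<n} \<times> {..<2})"
    by (rule indep_vars_compose2) (simp add: measurable_ident_sets)
  then show ?thesis by simp
qed

lemma distributed_sketch_entry:
  assumes "p \<in> {..<n} \<times> {..<2}"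
  shows "distributed (sketch_measure n) lborel (\<lambda>P. P p) (normal_density 0 (sqrt (1/2)))"
  unfolding distributed_def
proof (intro conjI)
  have "distr (sketch_measure n) lborel (\<lambda>P. P p) = distr (sketch_measure n) gauss_half (\<lambda>P. P p)"
    by (rule distr_cong) auto
  also have "\<dots> = gauss_half"
    unfolding sketch_measure_def using assms by (intro distr_PiM_component prob_space_gauss_half) auto
  finally show "distr (sketch_measure n) lborel (\<lambda>P. P p) = density lborel (normal_density 0 (sqrt (1/2)))"
    unfolding gauss_half_def .
  show "(\<lambda>P. P p) \<in> measurable (sketch_measure n) lborel"
    unfolding measurable_cong_sets[OF sets_sketch_measure refl] measurable_lborel1
    using assms by (intro measurable_component_singleton) auto
qed simp

definition sketch_col :: "nat \<Rightarrow> (nat \<Rightarrow> real) \<Rightarrow> nat \<Rightarrow> (nat \<times> nat \<Rightarrow> real) \<Rightarrow> real" where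
  "sketch_col n x j P = (\<Sum>k<n. x k * P (k, j))"

lemma measurable_sketch_col [measurable]:
  "j < 2 \<Longrightarrow> sketch_col n x j \<in> borel_measurable (sketch_measure n)"
  unfolding sketch_col_def by measurable

lemma distributed_sketch_col:
  assumes j: "j < 2" and pos: "0 < (\<Sum>k<n. (x k)\<^sup>2)"
  shows "distributed (sketch_measure n) lborel (sketch_col n x j)
           (normal_density 0 (sqrt ((\<Sum>k<n. (x k)\<^sup>2) / 2)))"
proof -
  interpret prob_space "sketch_measure n" by (rule prob_space_sketch_measure)
  define N where "N = {k. k < n \<and> x k \<noteq> 0}"
  define K where "K = (\<lambda>k. (k, j)) ` N"
  have "N \<noteq> {}"
    using pos by (auto simp: N_def intro: ccontr)
  then have "K \<noteq> {}" by (simp add: K_def)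
  have "finite N" by (simp add: N_def)
  then have "finite K" by (simp add: K_def)
  have K_sub: "K \<subseteq> {..<n} \<times> {..<2}" using j by (auto simp: K_def N_def)
  have reindex: "(\<Sum>p\<in>K. f p) = (\<Sum>k<n. f (k, j))" if "\<And>k. x k = 0 \<Longrightarrow> f (k, j) = 0" for f :: "_ \<Rightarrow> real"
  proof -
    have "(\<Sum>p\<in>K. f p) = (\<Sum>k\<in>N. f (k, j))"
      unfolding K_def by (subst sum.reindex) (auto intro: inj_onI)
    also have "\<dots> = (\<Sum>k<n. f (k, j))"
      by (rule sum.mono_neutral_left) (auto simp: N_def that)
    finally show ?thesis .
  qed
  have "indep_vars (\<lambda>_. borel) (\<lambda>p P. P p) K"
    using indep_vars_sketch_entries K_sub by (rule indep_vars_subset)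
  then have indep: "indep_vars (\<lambda>_. borel) (\<lambda>p P. x (fst p) * P p) K"
    by (rule indep_vars_compose2[where Y="\<lambda>p v. x (fst p) * v"]) simp
  have summand_normal: "distributed (sketch_measure n) lborel (\<lambda>P. x (fst p) * P p)
      (normal_density 0 (\<bar>x (fst p)\<bar> * sqrt (1/2)))" if "p \<in> K" for p
  proof -
    have "x (fst p) \<noteq> 0" using that by (auto simp: K_def N_def)
    with normal_density_affine[OF distributed_sketch_entry, where \<alpha>="x (fst p)" and \<beta>=0] that K_sub
    show ?thesis by auto
  qed
  have summand_sd_pos: "0 < \<bar>x (fst p)\<bar> * sqrt (1/2)" if "p \<in> K" for p
    using that by (auto simp: K_def N_def)
  have "distributed (sketch_measure n) lborel (\<lambda>P. \<Sum>p\<in>K. x (fst p) * P p)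
     (normal_density 0 (sqrt (\<Sum>p\<in>K. (\<bar>x (fst p)\<bar> * sqrt (1/2))\<^sup>2)))"
    using sum_indep_normal[OF \<open>finite K\<close> \<open>K \<noteq> {}\<close> indep summand_sd_pos summand_normal]
    by simp
  moreover have "(\<lambda>P. \<Sum>p\<in>K. x (fst p) * P p) = sketch_col n x j"
    by (auto simp: sketch_col_def reindex)
  moreover have "(\<Sum>p\<in>K. (\<bar>x (fst p)\<bar> * sqrt (1/2))\<^sup>2) = (\<Sum>k<n. (x k)\<^sup>2) / 2"
    by (simp add: reindex power_mult_distrib sum_divide_distrib)
  ultimately show ?thesis by simp
qed

lemma indep_var_sketch_cols:
  "prob_space.indep_var (sketch_measure n) borel (sketch_col n x 0) borel (sketch_col n y 1)"
proof -
  interpret prob_space "sketch_measure n" by (rule prob_space_sketch_measure)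
  let ?C0 = "{..<n} \<times> {0::nat}" and ?C1 = "{..<n} \<times> {1::nat}"
  have "indep_var (PiM ?C0 (\<lambda>_. borel)) (\<lambda>P. restrict P ?C0) (PiM ?C1 (\<lambda>_. borel)) (\<lambda>P. restrict P ?C1)"
    by (rule indep_var_restrict[OF indep_vars_sketch_entries]) auto
  then have "indep_var borel ((\<lambda>R. \<Sum>k<n. x k * R (k, 0)) \<circ> (\<lambda>P. restrict P ?C0))
      borel ((\<lambda>R. \<Sum>k<n. y k * R (k, 1)) \<circ> (\<lambda>P. restrict P ?C1))"
    by (rule indep_var_compose) measurable
  moreover have "(\<lambda>R. \<Sum>k<n. x k * R (k, 0)) \<circ> (\<lambda>P. restrict P ?C0) = sketch_col n x 0"
    and "(\<lambda>R. \<Sum>k<n. y k * R (k, 1)) \<circ> (\<lambda>P. restrict P ?C1) = sketch_col n y 1"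
    by (auto simp: fun_eq_iff sketch_col_def intro!: sum.cong)
  ultimately show ?thesis by simp
qed

definition sketch_sqnorm :: "nat \<Rightarrow> (nat \<Rightarrow> real) \<Rightarrow> (nat \<times> nat \<Rightarrow> real) \<Rightarrow> real" where
  "sketch_sqnorm n x P = (sketch_col n x 0 P)\<^sup>2 + (sketch_col n x 1 P)\<^sup>2"

lemma measurable_sketch_sqnorm [measurable]:
  "sketch_sqnorm n x \<in> borel_measurable (sketch_measure n)"
  unfolding sketch_sqnorm_def[abs_def] by measurable

lemma sketch_col_eq_0: "(\<Sum>k<n. (x k)\<^sup>2) = 0 \<Longrightarrow> sketch_col n x j P = 0"
  by (simp add: sketch_col_def sum_nonneg_eq_0_iff)

lemma sketch_col_sq_integral:
  assumes "j < 2"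
  shows "integrable (sketch_measure n) (\<lambda>P. (sketch_col n x j P)\<^sup>2)"
    and "(\<integral>P. (sketch_col n x j P)\<^sup>2 \<partial>sketch_measure n) = (\<Sum>k<n. (x k)\<^sup>2) / 2"
proof -
  interpret prob_space "sketch_measure n" by (rule prob_space_sketch_measure)
  have "integrable (sketch_measure n) (\<lambda>P. (sketch_col n x j P)\<^sup>2) \<and>
      (\<integral>P. (sketch_col n x j P)\<^sup>2 \<partial>sketch_measure n) = (\<Sum>k<n. (x k)\<^sup>2) / 2"
  proof (cases "(\<Sum>k<n. (x k)\<^sup>2) = 0")
    case True
    then show ?thesis by (simp add: sketch_col_eq_0)
  next
    case False
    then have "0 < (\<Sum>k<n. (x k)\<^sup>2)" by (simp add: less_le sum_nonneg)
    define \<sigma> where "\<sigma> = sqrt ((\<Sum>k<n. (x k)\<^sup>2) / 2)"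
    have "0 < \<sigma>" using \<open>0 < (\<Sum>k<n. (x k)\<^sup>2)\<close> by (simp add: \<sigma>_def)
    have D: "distributed (sketch_measure n) lborel (sketch_col n x j) (normal_density 0 \<sigma>)"
      unfolding \<sigma>_def using assms \<open>0 < (\<Sum>k<n. (x k)\<^sup>2)\<close> by (rule distributed_sketch_col)
    have "integrable lborel (\<lambda>t. normal_density 0 \<sigma> t * t\<^sup>2)"
      using integrable_normal_moment[where \<mu>=0 and \<sigma>=\<sigma> and k=2] \<open>0 < \<sigma>\<close> by simp
    then have "integrable (sketch_measure n) (\<lambda>P. (sketch_col n x j P)\<^sup>2)"
      using distributed_integrable[OF D, of "\<lambda>t. t\<^sup>2"] by simp
    moreover have "variance (sketch_col n x j) = \<sigma>\<^sup>2" "expectation (sketch_col n x j) = 0"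
      using normal_distributed_variance[OF \<open>0 < \<sigma>\<close> D] normal_distributed_expectation[OF \<open>0 < \<sigma>\<close> D]
      by simp_all
    ultimately show ?thesis
      using \<open>0 < (\<Sum>k<n. (x k)\<^sup>2)\<close> by (simp add: \<sigma>_def)
  qed
  then show "integrable (sketch_measure n) (\<lambda>P. (sketch_col n x j P)\<^sup>2)"
    and "(\<integral>P. (sketch_col n x j P)\<^sup>2 \<partial>sketch_measure n) = (\<Sum>k<n. (x k)\<^sup>2) / 2"
    by auto
qed

lemma integrable_sketch_sqnorm: "integrable (sketch_measure n) (sketch_sqnorm n x)"
  unfolding sketch_sqnorm_def[abs_def] using sketch_col_sq_integral(1)[of _ n x] by simp

lemma integral_sketch_sqnorm:
  "(\<integral>P. sketch_sqnorm n x P \<partial>sketch_measure n) = (\<Sum>k<n. (x k)\<^sup>2)"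
  unfolding sketch_sqnorm_def
  by (subst Bochner_Integration.integral_add) (simp_all add: sketch_col_sq_integral)

lemma anti_concentrated_sketch_sqnorm:
  "anti_concentrated (sketch_measure n) (19/40) (\<Sum>k<n. (x k)\<^sup>2) (sketch_sqnorm n x)"
proof (cases "(\<Sum>k<n. (x k)\<^sup>2) = 0")
  case True
  then show ?thesis by (simp add: anti_concentrated_def sketch_sqnorm_def sketch_col_eq_0)
next
  case False
  interpret prob_space "sketch_measure n" by (rule prob_space_sketch_measure)
  define r where "r = (\<Sum>k<n. (x k)\<^sup>2)"
  have "0 < r" using False by (simp add: r_def less_le sum_nonneg)
  define \<sigma> where "\<sigma> = sqrt (r / 2)"
  have "0 < \<sigma>" using \<open>0 < r\<close> by (simp add: \<sigma>_def)
  have D: "distributed (sketch_measure n) lborel (sketch_col n x j) (normal_density 0 \<sigma>)"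
    if "j < 2" for j
    using that \<open>0 < r\<close> unfolding \<sigma>_def r_def by (rule distributed_sketch_col)
  define m where "m = 1 / sqrt (2 * pi * \<sigma>\<^sup>2)"
  have density_bound: "normal_density 0 \<sigma> t \<le> m" for t
    unfolding normal_density_def m_def by (rule mult_left_le) auto
  \<comment> \<open>Both entries are independent \<open>N(0, r/2)\<close>, so their joint density is at most \<open>1 / (\<pi> r)\<close>.\<close>
  have "prob {P \<in> space (sketch_measure n). sketch_sqnorm n x P \<le> s} \<le> s / r" if "0 \<le> s" for s
  proof -
    have "prob {P \<in> space (sketch_measure n). sketch_sqnorm n x P \<le> s} \<le> m\<^sup>2 * pi * s"
      unfolding sketch_sqnorm_def
      using D[of 0] D[of 1] that
      by (intro prob_sum_squares_le[OF _ _ indep_var_sketch_cols density_bound density_bound])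
         (auto simp: normal_density_nonneg)
    also have "m\<^sup>2 * pi * s = s / r"
      using \<open>0 < r\<close> by (simp add: m_def \<sigma>_def power_divide)
    finally show ?thesis .
  qed
  then have "anti_concentrated (sketch_measure n) ((real 20 - 1) / (2 * real 20)) r (sketch_sqnorm n x)"
    using \<open>0 < r\<close>
    by (intro anti_concentrated_if_small_ball integrable_sketch_sqnorm)
       (auto simp: sketch_sqnorm_def)
  then show ?thesis by (simp add: r_def)
qed

definition sketch_frob_sq :: "nat \<Rightarrow> (nat \<Rightarrow> nat \<Rightarrow> real) \<Rightarrow> (nat \<times> nat \<Rightarrow> real) \<Rightarrow> real" where
  "sketch_frob_sq n X P = (\<Sum>i<n. sketch_sqnorm n (X i) P)"

lemma measurable_sketch_frob_sq [measurable]: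
  "sketch_frob_sq n X \<in> borel_measurable (sketch_measure n)"
  unfolding sketch_frob_sq_def[abs_def] by measurable

lemma sketch_frob_sq_nonneg: "0 \<le> sketch_frob_sq n X P"
  unfolding sketch_frob_sq_def sketch_sqnorm_def by (intro sum_nonneg) simp

lemma frob_sq: "(frob m k X)\<^sup>2 = (\<Sum>i<m. \<Sum>j<k. (X i j)\<^sup>2)"
  unfolding frob_def by (simp add: sum_nonneg)

lemma frob_apply_sketch_diff:
  "frob n 2 (\<lambda>i j. apply_sketch n A P i j - apply_sketch n B P i j)
     = sqrt (sketch_frob_sq n (\<lambda>i k. A i k - B i k) P)"
proof -
  have "apply_sketch n A P i j - apply_sketch n B P i j = sketch_col n (\<lambda>k. A i k - B i k) j P" for i j
    unfolding apply_sketch_def sketch_col_def by (simp add: sum_subtractf left_diff_distrib)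
  then show ?thesis
    by (simp add: frob_def sketch_frob_sq_def sketch_sqnorm_def numeral_2_eq_2)
qed

lemma integrable_sketch_frob_sq: "integrable (sketch_measure n) (sketch_frob_sq n X)"
  unfolding sketch_frob_sq_def[abs_def] by (simp add: integrable_sketch_sqnorm)

lemma integral_sketch_frob_sq:
  "(\<integral>P. sketch_frob_sq n X P \<partial>sketch_measure n) = (frob n n X)\<^sup>2"
  unfolding sketch_frob_sq_def frob_sq
  by (simp add: Bochner_Integration.integral_sum integrable_sketch_sqnorm integral_sketch_sqnorm)

lemma anti_concentrated_sketch_frob_sq:
  "anti_concentrated (sketch_measure n) (19/40) ((frob n n X)\<^sup>2) (sketch_frob_sq n X)"
  unfolding sketch_frob_sq_def[abs_def] frob_sq
  by (intro anti_concentrated_sum anti_concentrated_sketch_sqnorm integrable_sketch_sqnorm) simp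

lemma quadratic_tail_bound:
  fixes p a :: real
  assumes "6 \<le> a" "0 \<le> p" "a * p + 19/40 * (1 - p)\<^sup>2 \<le> 1"
  shows "p \<le> 103/1000"
proof (rule ccontr)
  assume "\<not> p \<le> 103/1000"
  then have "103/1000 * p \<le> p * p" by (intro mult_right_mono) auto
  moreover have "6 * p \<le> a * p" using assms(1,2) by (intro mult_right_mono)
  moreover have "a * p + 19/40 * (1 - p)\<^sup>2 = a * p + 19/40 - 19/20 * p + 19/40 * (p * p)"
    by (simp add: power2_eq_square field_simps)
  ultimately show False
    using assms(3) \<open>\<not> p \<le> 103/1000\<close> by linarith
qed

lemma prob_sketch_frob_sq_less:
  assumes "0 < \<kappa>"
  shows "measure (sketch_measure n) {P \<in> space (sketch_measure n).
           sketch_frob_sq n X P < (1 / \<kappa>) * (frob n n X)\<^sup>2} \<le> (1 / \<kappa>) / (19/40)"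
  using assms
  by (intro prob_space.anti_concentrated_lower_tail prob_space_sketch_measure
      anti_concentrated_sketch_frob_sq integrable_sketch_frob_sq sketch_frob_sq_nonneg) auto

lemma prob_sketch_frob_sq_greater:
  assumes "6 \<le> \<kappa>"
  shows "measure (sketch_measure n) {P \<in> space (sketch_measure n).
           \<kappa> * (frob n n X)\<^sup>2 < sketch_frob_sq n X P} \<le> 103/1000"
  using assms
  by (intro quadratic_tail_bound[of \<kappa>] prob_space.anti_concentrated_upper_tail prob_space_sketch_measure
      anti_concentrated_sketch_frob_sq integrable_sketch_frob_sq integral_sketch_frob_sq
      sketch_frob_sq_nonneg) auto

lemma single_estimate_eq:
  "single_estimate n F A P =
     sqrt (6 * real (card F)) * Min ((\<lambda>B. sqrt (sketch_frob_sq n (\<lambda>i k. A i k - B i k) P)) ` F)"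
  unfolding single_estimate_def frob_apply_sketch_diff ..

lemma measurable_single_estimate [measurable]:
  "finite F \<Longrightarrow> single_estimate n F A \<in> borel_measurable (sketch_measure n)"
  unfolding single_estimate_eq[abs_def] by measurable

section \<open>Medians of independent trials\<close>

lemma borel_measurable_card_Collect:
  fixes t :: nat
  assumes "\<And>i. i < t \<Longrightarrow> {\<omega> \<in> space M. Q i \<omega>} \<in> sets M"
  shows "(\<lambda>\<omega>. real (card {i. i < t \<and> Q i \<omega>})) \<in> borel_measurable M"
proof -
  have "(\<lambda>\<omega>. \<Sum>i<t. indicator {\<omega> \<in> space M. Q i \<omega>} \<omega> :: real) \<in> borel_measurable M"
    using assms by (intro borel_measurable_sum borel_measurable_indicator) auto
  moreover have "(\<Sum>i<t. indicator {\<omega> \<in> space M. Q i \<omega>} \<omega> :: real) = real (card {i. i < t \<and> Q i \<omega>})"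
    if "\<omega> \<in> space M" for \<omega>
    using that by (simp add: indicator_def sum_of_bool_eq Int_def)
  ultimately show ?thesis by (metis (no_types, lifting) measurable_cong)
qed

context prob_space
begin

lemma borel_measurable_count_in_event:
  fixes t :: nat
  assumes "E \<in> events"
  shows "(\<lambda>\<omega>. real (card {i. i < t \<and> \<omega> i \<in> E})) \<in> borel_measurable (PiM {..<t} (\<lambda>_. M))"
  by (intro borel_measurable_card_Collect) (use assms in measurable)

lemma prob_count_in_event_ge:
  assumes E: "E \<in> events" and "prob E \<le> p" "0 < t" "0 \<le> \<epsilon>"
  shows "measure (PiM {..<t} (\<lambda>_. M)) {\<omega> \<in> space (PiM {..<t} (\<lambda>_. M)).
           real t * p + \<epsilon> \<le> real (card {i. i < t \<and> \<omega> i \<in> E})} \<le> exp (- 2 * \<epsilon>\<^sup>2 / real t)"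
proof -
  let ?T = "PiM {..<t} (\<lambda>_. M)"
  interpret T: prob_space ?T by (intro prob_space_PiM prob_space_axioms)
  define X where "X i \<omega> = (indicator E (\<omega> i) :: real)" for i :: nat and \<omega> :: "nat \<Rightarrow> 'a"
  have "T.indep_vars (\<lambda>_. M) (\<lambda>i \<omega>. \<omega> i) {..<t}"
    by (intro indep_vars_PiM_components prob_space_axioms)
  then have indep: "T.indep_vars (\<lambda>_. borel) X {..<t}"
    unfolding X_def by (rule T.indep_vars_compose2) (use E in simp)
  have expectation_X: "T.expectation (X i) = prob E" if "i < t" for i
  proof -
    have "T.expectation (X i) = (\<integral>x. indicator E x \<partial>distr ?T M (\<lambda>\<omega>. \<omega> i))"
      unfolding X_def using E that by (intro integral_distr[symmetric]) auto
    also have "distr ?T M (\<lambda>\<omega>. \<omega> i) = M"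
      using that by (intro distr_PiM_component prob_space_axioms) simp
    finally show ?thesis using E by simp
  qed
  define \<mu> where "\<mu> = (\<Sum>i<t. T.expectation (X i))"
  interpret Hoeffding_ineq ?T "{..<t}" X "\<lambda>_. 0" "\<lambda>_. 1" \<mu>
    by unfold_locales (auto simp: indep \<mu>_def X_def)
  have "\<mu> \<le> real t * p"
    using \<open>prob E \<le> p\<close> by (simp add: \<mu>_def expectation_X mult_left_mono)
  have count: "(\<Sum>i<t. X i \<omega>) = real (card {i. i < t \<and> \<omega> i \<in> E})" for \<omega>
    by (simp add: X_def indicator_def Int_def)
  have tail_event: "{\<omega> \<in> space ?T. \<mu> + \<epsilon> \<le> (\<Sum>i<t. X i \<omega>)} \<in> sets ?T"
    using borel_measurable_count_in_event[OF E] unfolding count by measurable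
  have "{\<omega> \<in> space ?T. real t * p + \<epsilon> \<le> real (card {i. i < t \<and> \<omega> i \<in> E})}
      \<subseteq> {\<omega> \<in> space ?T. \<mu> + \<epsilon> \<le> (\<Sum>i<t. X i \<omega>)}"
    unfolding count using \<open>\<mu> \<le> real t * p\<close> by auto
  then have "T.prob {\<omega> \<in> space ?T. real t * p + \<epsilon> \<le> real (card {i. i < t \<and> \<omega> i \<in> E})}
      \<le> T.prob {\<omega> \<in> space ?T. \<mu> + \<epsilon> \<le> (\<Sum>i<t. X i \<omega>)}"
    using tail_event by (rule T.finite_measure_mono)
  also have "\<dots> \<le> exp (-2 * \<epsilon>\<^sup>2 / (\<Sum>i<t. (1 - 0)\<^sup>2))"
    using \<open>0 < t\<close> \<open>0 \<le> \<epsilon>\<close> by (intro Hoeffding_ineq_ge) auto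
  finally show ?thesis by simp
qed

lemma prob_minority_in_event:
  assumes E: "E \<in> events" and "prob E \<le> p" "p \<le> 1/2"
  shows "1 - exp (- 2 * real t * (1/2 - p)\<^sup>2)
    \<le> measure (PiM {..<t} (\<lambda>_. M)) {\<omega> \<in> space (PiM {..<t} (\<lambda>_. M)). 2 * card {i. i < t \<and> \<omega> i \<in> E} < t}"
proof (cases "t = 0")
  case False
  let ?T = "PiM {..<t} (\<lambda>_. M)"
  interpret T: prob_space ?T by (intro prob_space_PiM prob_space_axioms)
  define \<epsilon> where "\<epsilon> = real t * (1/2 - p)"
  define good where "good = {\<omega> \<in> space ?T. 2 * card {i. i < t \<and> \<omega> i \<in> E} < t}"
  have good_real: "good = {\<omega> \<in> space ?T. 2 * real (card {i. i < t \<and> \<omega> i \<in> E}) < real t}"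
    unfolding good_def by (rule Collect_cong) linarith
  have good_event: "good \<in> sets ?T"
    unfolding good_real using borel_measurable_count_in_event[OF E] by measurable
  have half: "real t * p + \<epsilon> = real t / 2"
    by (simp add: \<epsilon>_def algebra_simps)
  have "space ?T - good \<subseteq> {\<omega> \<in> space ?T. real t * p + \<epsilon> \<le> real (card {i. i < t \<and> \<omega> i \<in> E})}"
  proof
    fix \<omega> assume "\<omega> \<in> space ?T - good"
    then have "\<omega> \<in> space ?T" and "\<not> 2 * card {i. i < t \<and> \<omega> i \<in> E} < t"
      unfolding good_def by blast+
    moreover from this(2) have "real t / 2 \<le> real (card {i. i < t \<and> \<omega> i \<in> E})"
      by linarith
    ultimately show "\<omega> \<in> {\<omega> \<in> space ?T. real t * p + \<epsilon> \<le> real (card {i. i < t \<and> \<omega> i \<in> E})}"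
      by (simp add: half)
  qed
  then have "T.prob (space ?T - good)
      \<le> T.prob {\<omega> \<in> space ?T. real t * p + \<epsilon> \<le> real (card {i. i < t \<and> \<omega> i \<in> E})}"
    by (rule T.finite_measure_mono) (use borel_measurable_count_in_event[OF E] in measurable)
  also have "\<dots> \<le> exp (- 2 * \<epsilon>\<^sup>2 / real t)"
    using False \<open>p \<le> 1/2\<close> by (intro prob_count_in_event_ge E \<open>prob E \<le> p\<close>) (auto simp: \<epsilon>_def)
  also have "\<dots> = exp (- 2 * real t * (1/2 - p)\<^sup>2)"
    using False by (simp add: \<epsilon>_def power2_eq_square)
  finally show ?thesis
    using T.prob_compl[OF good_event] by (simp add: good_def)
qed simp

end

lemma sorted_nth_less_iff:
  fixes ys :: "'a::linorder list"
  assumes "sorted ys" "m < length ys"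
  shows "ys ! m < a \<longleftrightarrow> m < card {i. i < length ys \<and> ys ! i < a}"
proof
  assume "ys ! m < a"
  then have "{..m} \<subseteq> {i. i < length ys \<and> ys ! i < a}"
    using assms by (auto intro: le_less_trans[OF sorted_nth_mono[OF assms(1)]])
  from card_mono[OF _ this] show "m < card {i. i < length ys \<and> ys ! i < a}" by simp
next
  assume less_card: "m < card {i. i < length ys \<and> ys ! i < a}"
  show "ys ! m < a"
  proof (rule ccontr)
    assume "\<not> ys ! m < a"
    have "i < m" if "i < length ys" "ys ! i < a" for i
    proof (rule ccontr)
      assume "\<not> i < m"
      then have "ys ! m \<le> ys ! i" using sorted_nth_mono[OF assms(1)] that(1) by simp
      with that(2) \<open>\<not> ys ! m < a\<close> show False by simp
    qed
    then have "{i. i < length ys \<and> ys ! i < a} \<subseteq> {..<m}" by auto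
    from card_mono[OF _ this] less_card show False by simp
  qed
qed

lemma sorted_less_nth_iff:
  fixes ys :: "'a::linorder list"
  assumes "sorted ys" "m < length ys"
  shows "u < ys ! m \<longleftrightarrow> length ys - m \<le> card {i. i < length ys \<and> u < ys ! i}"
proof
  assume "u < ys ! m"
  then have "{m..<length ys} \<subseteq> {i. i < length ys \<and> u < ys ! i}"
    using assms by (auto intro: less_le_trans[OF _ sorted_nth_mono[OF assms(1)]])
  from card_mono[OF _ this] show "length ys - m \<le> card {i. i < length ys \<and> u < ys ! i}" by simp
next
  assume card_ge: "length ys - m \<le> card {i. i < length ys \<and> u < ys ! i}"
  show "u < ys ! m"
  proof (rule ccontr)
    assume "\<not> u < ys ! m"
    have "m < i" if "i < length ys" "u < ys ! i" for i
    proof (rule ccontr)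
      assume "\<not> m < i"
      then have "ys ! i \<le> ys ! m" using sorted_nth_mono[OF assms(1)] assms(2) by simp
      with that(2) \<open>\<not> u < ys ! m\<close> show False by simp
    qed
    then have "{i. i < length ys \<and> u < ys ! i} \<subseteq> {Suc m..<length ys}" by (auto simp: Suc_le_eq)
    from card_mono[OF _ this] card_ge assms(2) show False by simp
  qed
qed

lemma card_nth_sort:
  "card {i. i < length xs \<and> P (sort xs ! i)} = card {i. i < length xs \<and> P (xs ! i)}"
proof -
  have "length (filter P (sort xs)) = length (filter P xs)"
    by (metis mset_filter mset_sort size_mset)
  then show ?thesis by (simp add: length_filter_conv_card)
qed

lemma le_median_iff:
  assumes "xs \<noteq> []"
  shows "a \<le> median xs \<longleftrightarrow> card {i. i < length xs \<and> xs ! i < a} \<le> length xs div 2"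
  using sorted_nth_less_iff[of "sort xs" "length xs div 2" a] card_nth_sort[of xs "\<lambda>x. x < a"] assms
  by (auto simp: median_def not_less[symmetric])

lemma median_le_iff:
  assumes "xs \<noteq> []"
  shows "median xs \<le> u \<longleftrightarrow> card {i. i < length xs \<and> u < xs ! i} < length xs - length xs div 2"
  using sorted_less_nth_iff[of "sort xs" "length xs div 2" u] card_nth_sort[of xs "\<lambda>x. u < x"] assms
  by (auto simp: median_def not_less[symmetric])

lemma median_between_if_majority:
  assumes "2 * card {i. i < length xs \<and> xs ! i \<notin> {a..u}} < length xs"
  shows "a \<le> median xs \<and> median xs \<le> u"
proof -
  let ?bad = "card {i. i < length xs \<and> xs ! i \<notin> {a..u}}"
  have "xs \<noteq> []" using assms by auto
  have "card {i. i < length xs \<and> xs ! i < a} \<le> ?bad"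
    and "card {i. i < length xs \<and> u < xs ! i} \<le> ?bad"
    by (auto intro!: card_mono)
  moreover have "?bad \<le> length xs div 2" "?bad < length xs - length xs div 2"
    using assms by presburger+
  ultimately show ?thesis
    unfolding le_median_iff[OF \<open>xs \<noteq> []\<close>] median_le_iff[OF \<open>xs \<noteq> []\<close>] by linarith
qed

section \<open>The coarse approximation\<close>

lemma Min_sqrt_bracket:
  fixes s w :: "'b \<Rightarrow> real"
  assumes "finite F" "B\<^sub>0 \<in> F" "0 < \<kappa>"
    and w_min: "\<And>B. B \<in> F \<Longrightarrow> w B\<^sub>0 \<le> w B"
    and w_le: "\<And>B. B \<in> F \<Longrightarrow> w B \<le> \<kappa> * s B" and s_le: "s B\<^sub>0 \<le> \<kappa> * w B\<^sub>0"
  shows "Min ((\<lambda>B. sqrt (w B)) ` F) \<le> sqrt \<kappa> * Min ((\<lambda>B. sqrt (s B)) ` F)"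
    and "sqrt \<kappa> * Min ((\<lambda>B. sqrt (s B)) ` F) \<le> \<kappa> * Min ((\<lambda>B. sqrt (w B)) ` F)"
proof -
  have Min_w: "Min ((\<lambda>B. sqrt (w B)) ` F) = sqrt (w B\<^sub>0)"
    using assms(1,2) w_min by (intro Min_eqI) auto
  obtain B\<^sub>1 where "B\<^sub>1 \<in> F" and Min_s: "Min ((\<lambda>B. sqrt (s B)) ` F) = sqrt (s B\<^sub>1)"
  proof -
    have "Min ((\<lambda>B. sqrt (s B)) ` F) \<in> (\<lambda>B. sqrt (s B)) ` F"
      using assms(1,2) by (intro Min_in) auto
    then show thesis using that by blast
  qed
  show "Min ((\<lambda>B. sqrt (w B)) ` F) \<le> sqrt \<kappa> * Min ((\<lambda>B. sqrt (s B)) ` F)"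
    using w_min[OF \<open>B\<^sub>1 \<in> F\<close>] w_le[OF \<open>B\<^sub>1 \<in> F\<close>] unfolding Min_w Min_s
    by (simp add: real_sqrt_mult[symmetric])
  have "sqrt \<kappa> * Min ((\<lambda>B. sqrt (s B)) ` F) \<le> sqrt \<kappa> * sqrt (s B\<^sub>0)"
    using assms(1,2,3) by (intro mult_left_mono Min_le) auto
  also have "\<dots> \<le> sqrt \<kappa> * sqrt (\<kappa> * w B\<^sub>0)"
    using s_le \<open>0 < \<kappa>\<close> by (intro mult_left_mono) auto
  also have "\<dots> = \<kappa> * sqrt (w B\<^sub>0)"
    using \<open>0 < \<kappa>\<close> by (simp add: real_sqrt_mult)
  finally show "sqrt \<kappa> * Min ((\<lambda>B. sqrt (s B)) ` F) \<le> \<kappa> * Min ((\<lambda>B. sqrt (w B)) ` F)"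
    unfolding Min_w .
qed

lemma prob_single_estimate_fails:
  fixes n :: nat and A :: "nat \<Rightarrow> nat \<Rightarrow> real"
  assumes "finite F" "F \<noteq> {}"
  defines "OPT \<equiv> Min ((\<lambda>B. frob n n (\<lambda>i j. A i j - B i j)) ` F)"
  shows "measure (sketch_measure n) {P \<in> space (sketch_measure n).
           \<not> (OPT \<le> single_estimate n F A P \<and> single_estimate n F A P \<le> 6 * real (card F) * OPT)}
         \<le> 23/50"
proof -
  interpret prob_space "sketch_measure n" by (rule prob_space_sketch_measure)
  define \<kappa> where "\<kappa> = 6 * real (card F)"
  define S where "S B = sketch_frob_sq n (\<lambda>i k. A i k - B i k)" for B
  define W where "W B = (frob n n (\<lambda>i k. A i k - B i k))\<^sup>2" for B
  have "6 \<le> \<kappa>" using assms(1,2) by (simp add: \<kappa>_def Suc_le_eq card_gt_0_iff)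
  obtain B\<^sub>0 where "B\<^sub>0 \<in> F" and W_min: "\<And>B. B \<in> F \<Longrightarrow> W B\<^sub>0 \<le> W B"
    using ex_is_arg_min_if_finite[OF assms(1,2), of W] by (auto simp: is_arg_min_linorder)
  have OPT_eq: "OPT = Min ((\<lambda>B. sqrt (W B)) ` F)"
    unfolding OPT_def W_def by (simp add: frob_def sum_nonneg)
  have estimate_eq: "single_estimate n F A P = sqrt \<kappa> * Min ((\<lambda>B. sqrt (S B P)) ` F)" for P
    unfolding single_estimate_eq S_def \<kappa>_def ..
  define Low where "Low B = {P \<in> space (sketch_measure n). S B P < (1 / \<kappa>) * W B}" for B
  define High where "High = {P \<in> space (sketch_measure n). \<kappa> * W B\<^sub>0 < S B\<^sub>0 P}"
  have Low_events: "Low B \<in> events" for B unfolding Low_def S_def by measurable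
  have High_event: "High \<in> events" unfolding High_def S_def by measurable
  have "{P \<in> space (sketch_measure n).
           \<not> (OPT \<le> single_estimate n F A P \<and> single_estimate n F A P \<le> \<kappa> * OPT)}
        \<subseteq> (\<Union>B\<in>F. Low B) \<union> High"
  proof (rule subsetI, rule ccontr)
    fix P assume P: "P \<in> {P \<in> space (sketch_measure n).
        \<not> (OPT \<le> single_estimate n F A P \<and> single_estimate n F A P \<le> \<kappa> * OPT)}"
      and "P \<notin> (\<Union>B\<in>F. Low B) \<union> High"
    then have W_le: "W B \<le> \<kappa> * S B P" if "B \<in> F" for B
      using that \<open>6 \<le> \<kappa>\<close> by (auto simp: Low_def field_simps)
    have S_le: "S B\<^sub>0 P \<le> \<kappa> * W B\<^sub>0"
      using P \<open>P \<notin> (\<Union>B\<in>F. Low B) \<union> High\<close> by (auto simp: High_def)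
    have "0 < \<kappa>" using \<open>6 \<le> \<kappa>\<close> by simp
    from Min_sqrt_bracket[where w = W and s = "\<lambda>B. S B P", OF assms(1) \<open>B\<^sub>0 \<in> F\<close> this W_min W_le S_le]
    have "OPT \<le> single_estimate n F A P \<and> single_estimate n F A P \<le> \<kappa> * OPT"
      unfolding OPT_eq estimate_eq by (simp add: W_def)
    with P show False by simp
  qed
  then have "prob {P \<in> space (sketch_measure n).
           \<not> (OPT \<le> single_estimate n F A P \<and> single_estimate n F A P \<le> \<kappa> * OPT)}
        \<le> prob ((\<Union>B\<in>F. Low B) \<union> High)"
    using Low_events High_event assms(1) by (intro finite_measure_mono sets.Un sets.finite_UN) auto
  also have "\<dots> \<le> (\<Sum>B\<in>F. prob (Low B)) + prob High"
    using Low_events High_event assms(1)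
    by (intro order_trans[OF measure_Un_le] add_mono finite_measure_subadditive_finite) auto
  also have "\<dots> \<le> (\<Sum>B\<in>F. (1 / \<kappa>) / (19/40)) + 103/1000"
    using prob_sketch_frob_sq_less[of \<kappa>] prob_sketch_frob_sq_greater[of \<kappa>] \<open>6 \<le> \<kappa>\<close>
    unfolding Low_def High_def S_def W_def by (intro add_mono sum_mono) auto
  also have "\<dots> \<le> 23/50"
    using \<open>6 \<le> \<kappa>\<close> by (simp add: \<kappa>_def)
  finally show ?thesis by (simp add: \<kappa>_def)
qed

lemma measurable_trial [measurable]:
  "i < t \<Longrightarrow> (\<lambda>\<omega>. \<omega> i) \<in> measurable (trials n t) (sketch_measure n)"
  unfolding trials_def by (rule measurable_component_singleton) simp

lemma measurable_coarse_output [measurable]: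
  assumes "finite F"
  shows "coarse_output n F A t \<in> borel_measurable (trials n t)"
proof (cases "t = 0")
  case True
  then show ?thesis by (simp add: coarse_output_def[abs_def])
next
  case False
  have "{\<omega> \<in> space (trials n t). coarse_output n F A t \<omega> \<le> u} \<in> sets (trials n t)" for u
  proof -
    have "{\<omega> \<in> space (trials n t). coarse_output n F A t \<omega> \<le> u} =
        {\<omega> \<in> space (trials n t). card {i. i < t \<and> u < single_estimate n F A (\<omega> i)} < t - t div 2}"
      using False by (auto simp: coarse_output_def median_le_iff cong: conj_cong)
    also have "\<dots> = {\<omega> \<in> space (trials n t).
        real (card {i. i < t \<and> u < single_estimate n F A (\<omega> i)}) < real (t - t div 2)}"
      by (simp only: of_nat_less_iff)
    also have "\<dots> \<in> sets (trials n t)"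
    proof -
      have "(\<lambda>\<omega>. real (card {i. i < t \<and> u < single_estimate n F A (\<omega> i)})) \<in> borel_measurable (trials n t)"
        by (rule borel_measurable_card_Collect) (use assms in measurable)
      then show ?thesis by measurable
    qed
    finally show ?thesis .
  qed
  then show ?thesis by (simp add: borel_measurable_iff_le)
qed

lemma prob_coarse_output_within:
  fixes n t :: nat and A :: "nat \<Rightarrow> nat \<Rightarrow> real"
  assumes "finite F" "F \<noteq> {}"
  defines "OPT \<equiv> Min ((\<lambda>B. frob n n (\<lambda>i j. A i j - B i j)) ` F)"
  shows "1 - exp (- 2 * real t / 625) \<le> measure (trials n t) {\<omega> \<in> space (trials n t).
           OPT \<le> coarse_output n F A t \<omega> \<and> coarse_output n F A t \<omega> \<le> 6 * real (card F) * OPT}"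
proof -
  interpret prob_space "sketch_measure n" by (rule prob_space_sketch_measure)
  interpret T: prob_space "trials n t"
    unfolding trials_def by (intro prob_space_PiM prob_space_sketch_measure)
  define E where "E = {P \<in> space (sketch_measure n).
    \<not> (OPT \<le> single_estimate n F A P \<and> single_estimate n F A P \<le> 6 * real (card F) * OPT)}"
  have "E \<in> events" unfolding E_def using assms(1) by measurable
  have "1 - exp (- 2 * real t / 625) = 1 - exp (- 2 * real t * (1/2 - 23/50)\<^sup>2)"
    by (simp add: power2_eq_square)
  also have "\<dots> \<le> measure (trials n t)
      {\<omega> \<in> space (trials n t). 2 * card {i. i < t \<and> \<omega> i \<in> E} < t}"
    unfolding trials_def using \<open>E \<in> events\<close> prob_single_estimate_fails[OF assms(1,2), of n A]
    by (intro prob_minority_in_event) (auto simp: E_def OPT_def)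
  also have "\<dots> \<le> measure (trials n t) {\<omega> \<in> space (trials n t).
      OPT \<le> coarse_output n F A t \<omega> \<and> coarse_output n F A t \<omega> \<le> 6 * real (card F) * OPT}"
  proof (rule T.finite_measure_mono)
    show "{\<omega> \<in> space (trials n t). OPT \<le> coarse_output n F A t \<omega> \<and>
        coarse_output n F A t \<omega> \<le> 6 * real (card F) * OPT} \<in> sets (trials n t)"
      using assms(1) by measurable
    show "{\<omega> \<in> space (trials n t). 2 * card {i. i < t \<and> \<omega> i \<in> E} < t}
      \<subseteq> {\<omega> \<in> space (trials n t). OPT \<le> coarse_output n F A t \<omega> \<and>
        coarse_output n F A t \<omega> \<le> 6 * real (card F) * OPT}"
    proof safe
      fix \<omega> assume \<omega>: "\<omega> \<in> space (trials n t)" and majority: "2 * card {i. i < t \<and> \<omega> i \<in> E} < t"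
      let ?xs = "map (\<lambda>i. single_estimate n F A (\<omega> i)) [0..<t]"
      have "{i. i < length ?xs \<and> ?xs ! i \<notin> {OPT..6 * real (card F) * OPT}} = {i. i < t \<and> \<omega> i \<in> E}"
        using measurable_space[OF measurable_trial \<omega>] by (auto simp: E_def)
      with majority have "OPT \<le> median ?xs \<and> median ?xs \<le> 6 * real (card F) * OPT"
        by (intro median_between_if_majority) simp
      then show "OPT \<le> coarse_output n F A t \<omega>" "coarse_output n F A t \<omega> \<le> 6 * real (card F) * OPT"
        by (simp_all add: coarse_output_def)
    qed
  qed
  finally show ?thesis .
qed

lemma num_trials_bounds:
  assumes "0 \<le> c * ln (1 / \<delta>)"
  shows "c * ln (1 / \<delta>) \<le> real (num_trials c \<delta>)" "real (num_trials c \<delta>) \<le> c * ln (1 / \<delta>) + 1"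
  using assms by (simp_all add: num_trials_def of_nat_nat le_of_int_ceiling of_int_ceiling_le_add_one)

lemma coarse_approximation_guarantee:
  fixes n :: nat and A :: "nat \<Rightarrow> nat \<Rightarrow> real"
  assumes "625/2 \<le> c" "finite F" "F \<noteq> {}" "0 < \<delta>" "\<delta> < 1"
  defines "t \<equiv> num_trials c \<delta>" and "OPT \<equiv> Min ((\<lambda>B. frob n n (\<lambda>i j. A i j - B i j)) ` F)"
  shows "real (num_queries t) \<le> (2 * c + 2) * (ln (1 / \<delta>) + 1)"
    and "1 - \<delta> \<le> measure (trials n t) {\<omega> \<in> space (trials n t).
           OPT \<le> coarse_output n F A t \<omega> \<and> coarse_output n F A t \<omega> \<le> 6 * real (card F) * OPT}"
proof -
  define L where "L = ln (1 / \<delta>)"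
  have "0 < L" using assms(4,5) by (simp add: L_def)
  then have t_ge: "c * L \<le> real t" and t_le: "real t \<le> c * L + 1"
    using num_trials_bounds[of c \<delta>] \<open>625/2 \<le> c\<close> by (simp_all add: t_def L_def)
  show "real (num_queries t) \<le> (2 * c + 2) * (ln (1 / \<delta>) + 1)"
    using t_le \<open>0 < L\<close> \<open>625/2 \<le> c\<close> by (simp add: num_queries_def L_def algebra_simps)
  have "625/2 * L \<le> c * L" using \<open>0 < L\<close> \<open>625/2 \<le> c\<close> by (intro mult_right_mono) auto
  then have "exp (- 2 * real t / 625) \<le> exp (- L)" using t_ge by simp
  also have "exp (- L) = \<delta>" using assms(4) by (simp add: L_def ln_div)
  finally show "1 - \<delta> \<le> measure (trials n t) {\<omega> \<in> space (trials n t).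
      OPT \<le> coarse_output n F A t \<omega> \<and> coarse_output n F A t \<omega> \<le> 6 * real (card F) * OPT}"
    using prob_coarse_output_within[OF assms(2,3), where n=n and t=t and A=A] unfolding OPT_def by simp
qed

theorem claim2p4:
  shows "\<exists>c0::real. \<forall>c\<ge>c0. \<exists>C::real. \<forall>(n::nat) F A (\<delta>::real).
    finite F \<and> F \<noteq> {} \<and> F \<subseteq> sq_mats n \<and> A \<in> sq_mats n \<and> 0 < \<delta> \<and> \<delta> < 1 \<longrightarrow>
    (let t = num_trials c \<delta>;
         OPT = Min ((\<lambda>B. frob n n (\<lambda>i j. A i j - B i j)) ` F)
     in real (num_queries t) \<le> C * (ln (1 / \<delta>) + 1) \<and>
        measure (trials n t)
          {\<omega> \<in> space (trials n t).
             OPT \<le> coarse_output n F A t \<omega> \<and>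
             coarse_output n F A t \<omega> \<le> 6 * real (card F) * OPT} \<ge> 1 - \<delta>)"
  apply (rule exI[of _ "625/2"], intro allI impI)
  subgoal for c
    by (rule exI[of _ "2 * c + 2"]) (auto simp only: Let_def intro!: coarse_approximation_guarantee)
  done

end
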